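(* Let $\eta\in(0,1)$ and $\epsilon>0$. There exists $N_0$ such that for every Sawtooth model with $n\ge N_0+4$ upper particles, every $2\le r\le n-N_0$ and every $y\in[0,1]$, $$\mathbb P\Big(\bigcup_{r\le i\le r+N_0}\{X_i<\eta\}\ \Big|\ Y_{r+N_0}=y\Big)\ge1-\epsilon.$$
   Context: A (type $--$) Sawtooth model with $n\ge1$ upper particles is specified by functions $f_1,g_1,\dots,f_n,g_n:[0,1]\to[0,\infty)$, each nondecreasing, $C^1$ and not identically zero. It is the probability space $[0,1]^{n+1}\times[0,1]^n$ with probability density at $(x_1,\dots,x_{n+1},y_1,\dots,y_n)$ equal to $\frac{1}{\mathcal V}\prod_{i=1}^n\mathbf 1_{\{x_i\le y_i\}}\mathbf 1_{\{x_{i+1}\le y_i\}}f_i(y_i-x_i)\,g_i(y_i-x_{i+1})$, $\mathcal V$ being the normalizing constant; lower particles $X_1,\dots,X_{n+1}$, upper particles $Y_1,\dots,Y_n$. Conditional probabilities given $Y_j=y$ are computed from the joint density. *)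

theory Defs
  imports "HOL-Analysis.Analysis"
begin

text \<open>Sawtooth model (type --) with n upper particles.
  Lower particles x 1, ..., x (n+1); upper particles y 1, ..., y n, all in [0,1].
  The weight functions are f i, g i for i in {1..n}.\<close>

definition C1_on :: "real set \<Rightarrow> (real \<Rightarrow> real) \<Rightarrow> bool" where
  "C1_on S h \<longleftrightarrow> (\<exists>h'. continuous_on S h' \<and>
      (\<forall>t\<in>S. (h has_real_derivative h' t) (at t within S)))"

definition sawtooth_model :: "nat \<Rightarrow> (nat \<Rightarrow> real \<Rightarrow> real) \<Rightarrow> (nat \<Rightarrow> real \<Rightarrow> real) \<Rightarrow> bool" where
  "sawtooth_model n f g \<longleftrightarrow> n \<ge> 1 \<and>
     (\<forall>i\<in>{1..n}.
        (\<forall>t\<in>{0..1}. f i t \<ge> 0 \<and> g i t \<ge> 0) \<and>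
        mono_on {0..1} (f i) \<and> mono_on {0..1} (g i) \<and>
        C1_on {0..1} (f i) \<and> C1_on {0..1} (g i) \<and>
        (\<exists>t\<in>{0..1}. f i t \<noteq> 0) \<and> (\<exists>t\<in>{0..1}. g i t \<noteq> 0))"

text \<open>Unnormalised joint density (the normalising constant V cancels in all
  conditional probabilities).\<close>
definition sawtooth_weight ::
  "nat \<Rightarrow> (nat \<Rightarrow> real \<Rightarrow> real) \<Rightarrow> (nat \<Rightarrow> real \<Rightarrow> real) \<Rightarrow> (nat \<Rightarrow> real) \<Rightarrow> (nat \<Rightarrow> real) \<Rightarrow> real" where
  "sawtooth_weight n f g x y =
     (\<Prod>i\<in>{1..n+1}. indicator {0..1} (x i)) *
     (\<Prod>i\<in>{1..n}. indicator {0..1} (y i)) *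
     (\<Prod>i\<in>{1..n}. (if x i \<le> y i \<and> x (Suc i) \<le> y i
                      then f i (y i - x i) * g i (y i - x (Suc i)) else 0))"

text \<open>Integral of (indicator of the event P) times the joint weight over all
  variables except y j, with y j fixed to the value t.  With P = True this is
  V times the marginal density of Y_j at t.\<close>
definition sawtooth_slice ::
  "nat \<Rightarrow> (nat \<Rightarrow> real \<Rightarrow> real) \<Rightarrow> (nat \<Rightarrow> real \<Rightarrow> real) \<Rightarrow> nat \<Rightarrow> real \<Rightarrow>
   ((nat \<Rightarrow> real) \<Rightarrow> (nat \<Rightarrow> real) \<Rightarrow> bool) \<Rightarrow> real" where
  "sawtooth_slice n f g j t P =
     integral\<^sup>L (pair_measure (PiM {1..n+1} (\<lambda>_. lborel)) (PiM ({1..n} - {j}) (\<lambda>_. lborel)))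
       (\<lambda>(x, y). (if P x (y(j := t)) then 1 else 0) * sawtooth_weight n f g x (y(j := t)))"

definition sawtooth_marg ::
  "nat \<Rightarrow> (nat \<Rightarrow> real \<Rightarrow> real) \<Rightarrow> (nat \<Rightarrow> real \<Rightarrow> real) \<Rightarrow> nat \<Rightarrow> real \<Rightarrow> real" where
  "sawtooth_marg n f g j t = sawtooth_slice n f g j t (\<lambda>_ _. True)"

definition sawtooth_cond ::
  "nat \<Rightarrow> (nat \<Rightarrow> real \<Rightarrow> real) \<Rightarrow> (nat \<Rightarrow> real \<Rightarrow> real) \<Rightarrow> nat \<Rightarrow> real \<Rightarrow>
   ((nat \<Rightarrow> real) \<Rightarrow> (nat \<Rightarrow> real) \<Rightarrow> bool) \<Rightarrow> real" where
  "sawtooth_cond n f g j t P = sawtooth_slice n f g j t P / sawtooth_marg n f g j t"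

end

theory Submission
  imports Defs
begin

text \<open>Given all upper particles, the lower particles are independent, and the conditional
  density of X_i is proportional to f_i(y_i - s) g_{i-1}(y_{i-1} - s) on
  0 \<le> s \<le> min(y_{i-1}, y_i). Since f_i and g_{i-1} are nondecreasing, this density is
  nonincreasing in s on [0,1], so X_i \<ge> \<eta> has conditional probability at most 1 - \<eta>.
  By independence all of X_r, ..., X_{r+N} exceed \<eta> with conditional probability at most
  (1 - \<eta>)^(N+1), uniformly in the upper particles; integrating out every upper particle
  except Y_{r+N} gives the bound, and N is chosen with (1 - \<eta>)^(N+1) \<le> \<epsilon>.\<close>

subsection \<open>Nonincreasing densities on the unit interval\<close>

lemma ennreal_le_fraction_of_sum:
  fixes A B c :: ennreal and \<eta> :: real
  assumes "0 \<le> \<eta>" "\<eta> \<le> 1" "B \<le> c * ennreal (1 - \<eta>)" "c * ennreal \<eta> \<le> A"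
  shows "B \<le> ennreal (1 - \<eta>) * (A + B)"
proof -
  have "ennreal \<eta> * B \<le> ennreal (1 - \<eta>) * (c * ennreal \<eta>)"
    using mult_left_mono[OF assms(3), of "ennreal \<eta>"] by (simp add: ac_simps)
  also have "\<dots> \<le> ennreal (1 - \<eta>) * A"
    using assms(4) by (rule mult_left_mono) simp
  finally have "ennreal \<eta> * B \<le> ennreal (1 - \<eta>) * A" .
  moreover have "B = ennreal \<eta> * B + ennreal (1 - \<eta>) * B"
    using assms(1,2) by (simp add: ennreal_plus[symmetric] distrib_right[symmetric])
  ultimately show ?thesis
    by (metis add_right_mono distrib_left)
qed

lemma nn_integral_tail_le_of_antimono:
  fixes \<phi> :: "real \<Rightarrow> real" and \<eta> :: real
  assumes meas: "\<phi> \<in> borel_measurable borel"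
    and nonneg: "\<And>s. 0 \<le> \<phi> s"
    and out: "\<And>s. s \<notin> {0..1} \<Longrightarrow> \<phi> s = 0"
    and anti: "\<And>a b. 0 \<le> a \<Longrightarrow> a \<le> b \<Longrightarrow> b \<le> 1 \<Longrightarrow> \<phi> b \<le> \<phi> a"
    and \<eta>: "0 \<le> \<eta>" "\<eta> \<le> 1"
  shows "(\<integral>\<^sup>+s. ennreal (indicator {\<eta>..} s * \<phi> s) \<partial>lborel)
          \<le> ennreal (1 - \<eta>) * (\<integral>\<^sup>+s. ennreal (\<phi> s) \<partial>lborel)"
proof -
  define A where "A = (\<integral>\<^sup>+s. ennreal (indicator {..<\<eta>} s * \<phi> s) \<partial>lborel)"
  define B where "B = (\<integral>\<^sup>+s. ennreal (indicator {\<eta>..} s * \<phi> s) \<partial>lborel)"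
  have "(\<integral>\<^sup>+s. ennreal (\<phi> s) \<partial>lborel)
      = (\<integral>\<^sup>+s. ennreal (indicator {..<\<eta>} s * \<phi> s) + ennreal (indicator {\<eta>..} s * \<phi> s) \<partial>lborel)"
    by (intro nn_integral_cong) (auto simp: indicator_def nonneg)
  also have "\<dots> = A + B"
    unfolding A_def B_def by (rule nn_integral_add) (use meas in auto)
  finally have total: "(\<integral>\<^sup>+s. ennreal (\<phi> s) \<partial>lborel) = A + B" .
  \<comment> \<open>\<phi> \<eta> separates the values of \<phi> below \<eta> from those above it\<close>
  have "B \<le> (\<integral>\<^sup>+s. ennreal (\<phi> \<eta>) * indicator {\<eta>..1} s \<partial>lborel)"
    unfolding B_def using anti[of \<eta>] out nonneg \<eta>
    by (intro nn_integral_mono) (auto simp: indicator_def)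
  also have "\<dots> = ennreal (\<phi> \<eta>) * ennreal (1 - \<eta>)"
    using \<eta> by (subst nn_integral_cmult_indicator) auto
  finally have upper: "B \<le> ennreal (\<phi> \<eta>) * ennreal (1 - \<eta>)" .
  have "ennreal (\<phi> \<eta>) * ennreal \<eta> = (\<integral>\<^sup>+s. ennreal (\<phi> \<eta>) * indicator {0..<\<eta>} s \<partial>lborel)"
    using \<eta> by (subst nn_integral_cmult_indicator) auto
  also have "\<dots> \<le> A"
    unfolding A_def using anti[of _ \<eta>] \<eta>
    by (intro nn_integral_mono) (auto simp: indicator_def intro: ennreal_leI)
  finally have lower: "ennreal (\<phi> \<eta>) * ennreal \<eta> \<le> A" .
  show ?thesis
    using ennreal_le_fraction_of_sum[OF \<eta> upper lower] by (simp add: B_def total)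
qed

lemma prod_if_indicator_atLeast:
  fixes x :: "'i \<Rightarrow> real"
  assumes "finite J" "I \<subseteq> J"
  shows "(\<Prod>i\<in>J. if i \<in> I then indicator {\<eta>..} (x i) else 1 :: real)
       = (if \<forall>i\<in>I. \<eta> \<le> x i then 1 else 0)"
proof -
  have "(\<Prod>i\<in>J. if i \<in> I then indicator {\<eta>..} (x i) else 1 :: real)
      = (\<Prod>i\<in>I. indicator {\<eta>..} (x i))"
    using assms by (simp add: prod.If_cases Int_absorb1)
  also have "\<dots> = (if \<forall>i\<in>I. \<eta> \<le> x i then 1 else 0)"
    using finite_subset[OF assms(2,1)] by (auto simp: indicator_def prod_zero_iff)
  finally show ?thesis .
qed

lemma nn_integral_PiM_all_above_le:
  fixes \<psi> :: "'i \<Rightarrow> real \<Rightarrow> real" and \<eta> :: real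
  assumes fin: "finite J" and IJ: "I \<subseteq> J"
    and meas: "\<And>i. i \<in> J \<Longrightarrow> \<psi> i \<in> borel_measurable borel"
    and nonneg: "\<And>i s. i \<in> J \<Longrightarrow> 0 \<le> \<psi> i s"
    and out: "\<And>i s. i \<in> J \<Longrightarrow> s \<notin> {0..1} \<Longrightarrow> \<psi> i s = 0"
    and anti: "\<And>i a b. i \<in> J \<Longrightarrow> 0 \<le> a \<Longrightarrow> a \<le> b \<Longrightarrow> b \<le> 1 \<Longrightarrow> \<psi> i b \<le> \<psi> i a"
    and \<eta>: "0 \<le> \<eta>" "\<eta> \<le> 1"
  shows "(\<integral>\<^sup>+x. ennreal ((if \<forall>i\<in>I. \<eta> \<le> x i then 1 else 0) * (\<Prod>i\<in>J. \<psi> i (x i))) \<partial>PiM J (\<lambda>_. lborel))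
     \<le> ennreal ((1 - \<eta>) ^ card I) * (\<integral>\<^sup>+x. ennreal (\<Prod>i\<in>J. \<psi> i (x i)) \<partial>PiM J (\<lambda>_. lborel))"
proof -
  interpret product_sigma_finite "\<lambda>_::'i. lborel :: real measure"
    by (simp add: product_sigma_finite_def sigma_finite_lborel)
  define \<psi>' where "\<psi>' i s = (if i \<in> I then indicator {\<eta>..} s else 1) * \<psi> i s" for i s
  have "(\<integral>\<^sup>+x. ennreal ((if \<forall>i\<in>I. \<eta> \<le> x i then 1 else 0) * (\<Prod>i\<in>J. \<psi> i (x i))) \<partial>PiM J (\<lambda>_. lborel))
      = (\<integral>\<^sup>+x. (\<Prod>i\<in>J. ennreal (\<psi>' i (x i))) \<partial>PiM J (\<lambda>_. lborel))"
    using nonneg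
    by (intro nn_integral_cong)
      (simp add: prod_ennreal \<psi>'_def prod.distrib prod_if_indicator_atLeast[OF fin IJ])
  also have "\<dots> = (\<Prod>i\<in>J. (\<integral>\<^sup>+s. ennreal (\<psi>' i s) \<partial>lborel))"
    using fin meas by (intro product_nn_integral_prod) (auto simp: \<psi>'_def)
  also have "\<dots> \<le> (\<Prod>i\<in>J. (if i \<in> I then ennreal (1 - \<eta>) else 1) * (\<integral>\<^sup>+s. ennreal (\<psi> i s) \<partial>lborel))"
    using nn_integral_tail_le_of_antimono[OF meas nonneg out anti \<eta>]
    by (intro prod_mono_ennreal) (simp add: \<psi>'_def)
  also have "\<dots> = (\<Prod>i\<in>J. if i \<in> I then ennreal (1 - \<eta>) else 1) * (\<Prod>i\<in>J. (\<integral>\<^sup>+s. ennreal (\<psi> i s) \<partial>lborel))"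
    by (rule prod.distrib)
  also have "(\<Prod>i\<in>J. if i \<in> I then ennreal (1 - \<eta>) else 1) = ennreal ((1 - \<eta>) ^ card I)"
    using fin IJ \<eta> by (simp add: prod.If_cases Int_absorb1 ennreal_power)
  also have "(\<Prod>i\<in>J. (\<integral>\<^sup>+s. ennreal (\<psi> i s) \<partial>lborel))
      = (\<integral>\<^sup>+x. ennreal (\<Prod>i\<in>J. \<psi> i (x i)) \<partial>PiM J (\<lambda>_. lborel))"
    using fin meas nonneg
    by (subst product_nn_integral_prod[symmetric]) (auto intro!: nn_integral_cong simp: prod_ennreal)
  finally show ?thesis .
qed

subsection \<open>Factorization of the Sawtooth weight\<close>

definition clamp01 :: "real \<Rightarrow> real" where
  "clamp01 u = max 0 (min 1 u)"

text \<open>The weight functions extended to all of \<open>\<real>\<close> (constant beyond the endpoints of [0,1])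
  and by 0 to all indices outside 1..n, so that they are monotone and continuous everywhere.\<close>
definition sawtooth_factor :: "nat \<Rightarrow> (nat \<Rightarrow> real \<Rightarrow> real) \<Rightarrow> nat \<Rightarrow> real \<Rightarrow> real" where
  "sawtooth_factor n h i u = (if i \<in> {1..n} then h i (clamp01 u) else 0)"

text \<open>Unnormalised conditional density of X_i given the upper particles y; X_i is coupled
  only to y_i (through f_i, absent for i = n+1) and to y_{i-1} (through g_{i-1}, absent for i = 1).\<close>
definition lower_density ::
  "nat \<Rightarrow> (nat \<Rightarrow> real \<Rightarrow> real) \<Rightarrow> (nat \<Rightarrow> real \<Rightarrow> real) \<Rightarrow> (nat \<Rightarrow> real) \<Rightarrow> nat \<Rightarrow> real \<Rightarrow> real" where
  "lower_density n f g y i s = indicator {0..1} s *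
     (if i \<le> n then (if s \<le> y i then sawtooth_factor n f i (y i - s) else 0) else 1) *
     (if 2 \<le> i then (if s \<le> y (i - 1) then sawtooth_factor n g (i - 1) (y (i - 1) - s) else 0) else 1)"

lemma clamp01_in_unit: "clamp01 u \<in> {0..1}"
  by (simp add: clamp01_def)

lemma clamp01_mono: "u \<le> v \<Longrightarrow> clamp01 u \<le> clamp01 v"
  by (simp add: clamp01_def)

lemma sawtooth_factor_nonneg:
  assumes "i \<in> {1..n} \<Longrightarrow> \<forall>t\<in>{0..1}. 0 \<le> h i t"
  shows "0 \<le> sawtooth_factor n h i u"
  using assms clamp01_in_unit by (simp add: sawtooth_factor_def)

lemma sawtooth_factor_mono:
  assumes "i \<in> {1..n} \<Longrightarrow> mono_on {0..1} (h i)" and "u \<le> v"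
  shows "sawtooth_factor n h i u \<le> sawtooth_factor n h i v"
proof (cases "i \<in> {1..n}")
  case True
  then show ?thesis
    using assms clamp01_in_unit clamp01_mono[OF assms(2)]
    by (simp add: sawtooth_factor_def mono_onD)
qed (auto simp: sawtooth_factor_def)

lemma C1_on_imp_continuous_on: "C1_on S h \<Longrightarrow> continuous_on S h"
  unfolding C1_on_def by (auto intro: DERIV_continuous_on)

lemma borel_measurable_sawtooth_factor:
  assumes "i \<in> {1..n} \<Longrightarrow> continuous_on {0..1} (h i)"
  shows "sawtooth_factor n h i \<in> borel_measurable borel"
proof (cases "i \<in> {1..n}")
  case True
  have "continuous_on UNIV (\<lambda>u. h i (clamp01 u))"
    using assms[OF True] unfolding clamp01_def
    by (rule continuous_on_compose2) (auto intro!: continuous_intros)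
  then show ?thesis
    using True by (simp add: sawtooth_factor_def borel_measurable_continuous_onI)
next
  case False
  then have "sawtooth_factor n h i = (\<lambda>_. 0)"
    by (auto simp: sawtooth_factor_def)
  then show ?thesis by simp
qed

lemma lower_density_eq_0: "s \<notin> {0..1} \<Longrightarrow> lower_density n f g y i s = 0"
  by (simp add: lower_density_def)

lemma sawtooth_weight_factorization:
  "sawtooth_weight n f g x y
     = (\<Prod>i\<in>{1..n}. indicator {0..1} (y i)) * (\<Prod>i\<in>{1..n+1}. lower_density n f g y i (x i))"
proof (cases "(\<forall>i\<in>{1..n+1}. x i \<in> {0..1}) \<and> (\<forall>i\<in>{1..n}. y i \<in> {0..1})")
  case False
  then consider k where "k \<in> {1..n+1}" "x k \<notin> {0..1}" | k where "k \<in> {1..n}" "y k \<notin> {0..1}"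
    by blast
  then show ?thesis
  proof cases
    case 1
    have "(\<Prod>i\<in>{1..n+1}. indicator {0..1} (x i)) = (0::real)"
      and "(\<Prod>i\<in>{1..n+1}. lower_density n f g y i (x i)) = 0"
      using 1 by (intro prod_zero bexI[where x=k]; simp add: lower_density_eq_0)+
    then show ?thesis by (simp only: sawtooth_weight_def mult_zero_left mult_zero_right)
  next
    case 2
    then have "(\<Prod>i\<in>{1..n}. indicator {0..1} (y i)) = (0::real)"
      by (intro prod_zero bexI[where x=k]) simp_all
    then show ?thesis by (simp only: sawtooth_weight_def mult_zero_left mult_zero_right)
  qed
next
  case True
  define a where "a i = (if x i \<le> y i then sawtooth_factor n f i (y i - x i) else 0)" for i
  define b where "b i = (if x (Suc i) \<le> y i then sawtooth_factor n g i (y i - x (Suc i)) else 0)" for i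
  have "(\<Prod>i\<in>{1..n+1}. lower_density n f g y i (x i))
      = (\<Prod>i\<in>{1..n+1}. (if i \<le> n then a i else 1) * (if 2 \<le> i then b (i - 1) else 1))"
    using True by (intro prod.cong) (auto simp: lower_density_def a_def b_def)
  also have "\<dots> = (\<Prod>i\<in>{1..n}. a i) * (\<Prod>i\<in>{1..n}. b i)"
  proof -
    have "(\<Prod>i\<in>{1..n+1}. if i \<le> n then a i else 1) = (\<Prod>i\<in>{1..n}. a i)"
      by (simp add: prod.cl_ivl_Suc)
    moreover have "(\<Prod>i\<in>{1..m+1}. if 2 \<le> i then b (i - 1) else 1) = (\<Prod>i\<in>{1..m}. b i)" for m
      by (induction m) (simp_all add: prod.cl_ivl_Suc)
    ultimately show ?thesis by (simp add: prod.distrib)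
  qed
  also have "\<dots> = (\<Prod>i\<in>{1..n}. if x i \<le> y i \<and> x (Suc i) \<le> y i
                       then f i (y i - x i) * g i (y i - x (Suc i)) else 0)"
    unfolding prod.distrib[symmetric]
  proof (intro prod.cong refl)
    fix i assume i: "i \<in> {1..n}"
    then have "x i \<in> {0..1}" "x (Suc i) \<in> {0..1}" "y i \<in> {0..1}"
      using True by auto
    then show "a i * b i = (if x i \<le> y i \<and> x (Suc i) \<le> y i
                             then f i (y i - x i) * g i (y i - x (Suc i)) else 0)"
      using i by (auto simp: a_def b_def sawtooth_factor_def clamp01_def)
  qed
  finally show ?thesis
    using True by (simp add: sawtooth_weight_def)
qed

locale sawtooth =
  fixes n :: nat and f g :: "nat \<Rightarrow> real \<Rightarrow> real"
  assumes model: "sawtooth_model n f g"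
begin

lemma lower_density_nonneg: "0 \<le> lower_density n f g y i s"
  using model unfolding lower_density_def sawtooth_model_def
  by (auto intro!: mult_nonneg_nonneg sawtooth_factor_nonneg)

lemma lower_density_antimono:
  assumes "0 \<le> a" "a \<le> b"
  shows "lower_density n f g y i b \<le> lower_density n f g y i a"
proof -
  have factor_props: "0 \<le> sawtooth_factor n h k u"
    "u \<le> v \<Longrightarrow> sawtooth_factor n h k u \<le> sawtooth_factor n h k v"
    if "h = f \<or> h = g" for h k u v
    using that model unfolding sawtooth_model_def
    by (auto intro!: sawtooth_factor_nonneg sawtooth_factor_mono)
  define A where "A s = (if i \<le> n then (if s \<le> y i then sawtooth_factor n f i (y i - s) else 0) else 1)" for s
  define B where "B s = (if 2 \<le> i then (if s \<le> y (i - 1) then sawtooth_factor n g (i - 1) (y (i - 1) - s) else 0) else 1)" for s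
  have nonneg: "0 \<le> A s" "0 \<le> B s" for s
    using factor_props by (auto simp: A_def B_def)
  moreover have "A b \<le> A a" "B b \<le> B a"
    using assms factor_props by (auto simp: A_def B_def)
  ultimately have "A b * B b \<le> A a * B a"
    by (intro mult_mono) auto
  then show ?thesis
    unfolding lower_density_def A_def[symmetric] B_def[symmetric]
    using assms nonneg by (auto simp: indicator_def)
qed

lemma borel_measurable_lower_density[measurable]:
  assumes [measurable]: "S \<in> borel_measurable M" "\<And>k. (\<lambda>\<omega>. Y \<omega> k) \<in> borel_measurable M"
  shows "(\<lambda>\<omega>. lower_density n f g (Y \<omega>) i (S \<omega>)) \<in> borel_measurable M"
proof -
  have [measurable]: "sawtooth_factor n f k \<in> borel_measurable borel"
    "sawtooth_factor n g k \<in> borel_measurable borel" for k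
    using model by (auto simp: sawtooth_model_def
        intro!: borel_measurable_sawtooth_factor C1_on_imp_continuous_on)
  show ?thesis unfolding lower_density_def by measurable
qed

lemma sawtooth_weight_nonneg: "0 \<le> sawtooth_weight n f g x y"
  unfolding sawtooth_weight_factorization
  by (intro mult_nonneg_nonneg prod_nonneg lower_density_nonneg) auto

lemma borel_measurable_sawtooth_weight:
  assumes [measurable]: "\<And>k. (\<lambda>\<omega>. X \<omega> k) \<in> borel_measurable M" "\<And>k. (\<lambda>\<omega>. Y \<omega> k) \<in> borel_measurable M"
  shows "(\<lambda>\<omega>. sawtooth_weight n f g (X \<omega>) (Y \<omega>)) \<in> borel_measurable M"
  unfolding sawtooth_weight_factorization by measurable

end

subsection \<open>Conditional probabilities given an upper particle\<close>

lemma integral_ratio_ge_of_complement_le: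
  fixes w :: "'a \<Rightarrow> real"
  assumes w: "w \<in> borel_measurable M" "\<And>\<omega>. 0 \<le> w \<omega>"
    and P: "Measurable.pred M P"
    and compl: "(\<integral>\<^sup>+\<omega>. ennreal ((if P \<omega> then 0 else 1) * w \<omega>) \<partial>M)
      \<le> ennreal q * (\<integral>\<^sup>+\<omega>. ennreal (w \<omega>) \<partial>M)"
    and q: "0 \<le> q"
    and pos: "0 < (\<integral>\<omega>. w \<omega> \<partial>M)"
  shows "1 - q \<le> (\<integral>\<omega>. (if P \<omega> then 1 else 0) * w \<omega> \<partial>M) / (\<integral>\<omega>. w \<omega> \<partial>M)"
proof -
  \<comment> \<open>a non-integrable function has Bochner integral 0\<close>
  have int: "integrable M w"
    using pos not_integrable_integral_eq by fastforce
  have int_ind: "integrable M (\<lambda>\<omega>. (if Q \<omega> then 1 else 0) * w \<omega>)" if "Measurable.pred M Q" for Q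
  proof (rule Bochner_Integration.integrable_bound[OF int])
    show "(\<lambda>\<omega>. (if Q \<omega> then 1 else 0) * w \<omega>) \<in> borel_measurable M"
      using that w(1) by measurable
  qed (use w(2) in auto)
  have int_P: "integrable M (\<lambda>\<omega>. (if P \<omega> then 1 else 0) * w \<omega>)"
    and int_not_P: "integrable M (\<lambda>\<omega>. (if P \<omega> then 0 else 1) * w \<omega>)"
    using int_ind[OF P] int_ind[OF pred_intros_logic(2)[OF P]] by (simp_all add: if_conn(4))
  have split: "(\<integral>\<omega>. w \<omega> \<partial>M)
      = (\<integral>\<omega>. (if P \<omega> then 1 else 0) * w \<omega> \<partial>M) + (\<integral>\<omega>. (if P \<omega> then 0 else 1) * w \<omega> \<partial>M)"
    unfolding Bochner_Integration.integral_add[OF int_P int_not_P, symmetric]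
    by (auto intro!: Bochner_Integration.integral_cong)
  have "ennreal (\<integral>\<omega>. (if P \<omega> then 0 else 1) * w \<omega> \<partial>M)
      = (\<integral>\<^sup>+\<omega>. ennreal ((if P \<omega> then 0 else 1) * w \<omega>) \<partial>M)"
    using int_not_P w(2) by (simp add: nn_integral_eq_integral)
  also have "\<dots> \<le> ennreal q * (\<integral>\<^sup>+\<omega>. ennreal (w \<omega>) \<partial>M)"
    by (rule compl)
  also have "\<dots> = ennreal (q * (\<integral>\<omega>. w \<omega> \<partial>M))"
    using int w(2) q by (simp add: nn_integral_eq_integral ennreal_mult)
  finally have "ennreal (\<integral>\<omega>. (if P \<omega> then 0 else 1) * w \<omega> \<partial>M) \<le> ennreal (q * (\<integral>\<omega>. w \<omega> \<partial>M))" .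
  then have "(\<integral>\<omega>. (if P \<omega> then 0 else 1) * w \<omega> \<partial>M) \<le> q * (\<integral>\<omega>. w \<omega> \<partial>M)"
    using q pos by (simp add: ennreal_le_iff)
  then show ?thesis
    using pos split by (simp add: le_divide_eq algebra_simps)
qed

lemma (in pair_sigma_finite) nn_integral_le_cmult_of_fibres:
  assumes [measurable]: "F \<in> borel_measurable (M1 \<Otimes>\<^sub>M M2)" "G \<in> borel_measurable (M1 \<Otimes>\<^sub>M M2)"
    and fibres: "\<And>y. (\<integral>\<^sup>+x. F (x, y) \<partial>M1) \<le> c * (\<integral>\<^sup>+x. G (x, y) \<partial>M1)"
  shows "(\<integral>\<^sup>+\<omega>. F \<omega> \<partial>(M1 \<Otimes>\<^sub>M M2)) \<le> c * (\<integral>\<^sup>+\<omega>. G \<omega> \<partial>(M1 \<Otimes>\<^sub>M M2))"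
proof -
  have "(\<integral>\<^sup>+\<omega>. F \<omega> \<partial>(M1 \<Otimes>\<^sub>M M2)) = (\<integral>\<^sup>+y. (\<integral>\<^sup>+x. F (x, y) \<partial>M1) \<partial>M2)"
    by (rule nn_integral_snd[symmetric]) measurable
  also have "\<dots> \<le> (\<integral>\<^sup>+y. c * (\<integral>\<^sup>+x. G (x, y) \<partial>M1) \<partial>M2)"
    by (intro nn_integral_mono fibres)
  also have "\<dots> = (\<integral>\<^sup>+y. (\<integral>\<^sup>+x. c * G (x, y) \<partial>M1) \<partial>M2)"
    using measurable_Pair1[OF assms(2)] by (intro nn_integral_cong) (simp add: nn_integral_cmult)
  also have "\<dots> = c * (\<integral>\<^sup>+\<omega>. G \<omega> \<partial>(M1 \<Otimes>\<^sub>M M2))"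
    using nn_integral_snd[of "\<lambda>\<omega>. c * G \<omega>"] by (simp add: nn_integral_cmult)
  finally show ?thesis .
qed

lemma borel_measurable_PiM_component:
  "(\<lambda>x. x k) \<in> borel_measurable (PiM J (\<lambda>_. lborel :: real measure))"
proof (cases "k \<in> J")
  case False
  \<comment> \<open>outside J every element of the product space takes the value undefined\<close>
  have "(\<lambda>x. undefined :: real) \<in> borel_measurable (PiM J (\<lambda>_. lborel))"
    by simp
  then show ?thesis
    by (rule measurable_cong[THEN iffD1, rotated])
      (use False in \<open>auto simp: space_PiM PiE_def extensional_def\<close>)
qed measurable

context sawtooth
begin

lemma nn_integral_sawtooth_weight_all_above_le:
  assumes \<eta>: "0 \<le> \<eta>" "\<eta> \<le> 1" and I: "I \<subseteq> {1..n+1}"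
  shows "(\<integral>\<^sup>+x. ennreal ((if \<forall>i\<in>I. \<eta> \<le> x i then 1 else 0) * sawtooth_weight n f g x y) \<partial>PiM {1..n+1} (\<lambda>_. lborel))
     \<le> ennreal ((1 - \<eta>) ^ card I) * (\<integral>\<^sup>+x. ennreal (sawtooth_weight n f g x y) \<partial>PiM {1..n+1} (\<lambda>_. lborel))"
proof -
  define M where "M = PiM {1..n+1} (\<lambda>_. lborel :: real measure)"
  define c where "c = (\<Prod>i\<in>{1..n}. indicator {0..1} (y i) :: real)"
  define K where "K x = (\<Prod>i\<in>{1..n+1}. lower_density n f g y i (x i))" for x
  have c: "0 \<le> c" unfolding c_def by (intro prod_nonneg) auto
  have K: "0 \<le> K x" for x unfolding K_def by (intro prod_nonneg lower_density_nonneg)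
  have [measurable]: "(\<lambda>x. x k) \<in> borel_measurable M" for k
    unfolding M_def by (rule borel_measurable_PiM_component)
  have "finite I" using I finite_subset by blast
  then have [measurable]: "Measurable.pred M (\<lambda>x. \<forall>i\<in>I. \<eta> \<le> x i)"
    by measurable
  have density_meas: "lower_density n f g y i \<in> borel_measurable borel" for i
    using borel_measurable_lower_density[of "\<lambda>s. s" borel "\<lambda>_. y"] by simp
  have factor_out_upper: "(\<integral>\<^sup>+x. ennreal (h x * sawtooth_weight n f g x y) \<partial>M) = ennreal c * (\<integral>\<^sup>+x. ennreal (h x * K x) \<partial>M)"
    if [measurable]: "h \<in> borel_measurable M" and h: "\<And>x. 0 \<le> h x" for h
  proof -
    have [measurable]: "K \<in> borel_measurable M"
      unfolding K_def by measurable
    have "(\<integral>\<^sup>+x. ennreal (h x * sawtooth_weight n f g x y) \<partial>M) = (\<integral>\<^sup>+x. ennreal c * ennreal (h x * K x) \<partial>M)"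
      using c h K by (intro nn_integral_cong)
        (simp add: sawtooth_weight_factorization c_def K_def ennreal_mult[symmetric] ac_simps)
    also have "\<dots> = ennreal c * (\<integral>\<^sup>+x. ennreal (h x * K x) \<partial>M)"
      by (rule nn_integral_cmult) measurable
    finally show ?thesis .
  qed
  have "(\<integral>\<^sup>+x. ennreal ((if \<forall>i\<in>I. \<eta> \<le> x i then 1 else 0) * K x) \<partial>M)
      \<le> ennreal ((1 - \<eta>) ^ card I) * (\<integral>\<^sup>+x. ennreal (K x) \<partial>M)"
    unfolding M_def K_def using I density_meas
    by (intro nn_integral_PiM_all_above_le \<eta>)
      (auto intro: lower_density_nonneg lower_density_eq_0 lower_density_antimono)
  then have "ennreal c * (\<integral>\<^sup>+x. ennreal ((if \<forall>i\<in>I. \<eta> \<le> x i then 1 else 0) * K x) \<partial>M)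
      \<le> ennreal ((1 - \<eta>) ^ card I) * (ennreal c * (\<integral>\<^sup>+x. ennreal (1 * K x) \<partial>M))"
    by (simp add: mult_left_mono mult.left_commute)
  moreover have "(\<integral>\<^sup>+x. ennreal ((if \<forall>i\<in>I. \<eta> \<le> x i then 1 else 0) * sawtooth_weight n f g x y) \<partial>M)
      = ennreal c * (\<integral>\<^sup>+x. ennreal ((if \<forall>i\<in>I. \<eta> \<le> x i then 1 else 0) * K x) \<partial>M)"
    by (rule factor_out_upper) simp_all
  moreover have "(\<integral>\<^sup>+x. ennreal (1 * sawtooth_weight n f g x y) \<partial>M) = ennreal c * (\<integral>\<^sup>+x. ennreal (1 * K x) \<partial>M)"
    by (rule factor_out_upper) simp_all
  ultimately show ?thesis
    by (simp add: M_def)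
qed

lemma sawtooth_cond_some_below_ge:
  assumes \<eta>: "0 \<le> \<eta>" "\<eta> \<le> 1" and I: "I \<subseteq> {1..n+1}"
    and pos: "0 < sawtooth_marg n f g j t"
  shows "1 - (1 - \<eta>) ^ card I \<le> sawtooth_cond n f g j t (\<lambda>x y. \<exists>i\<in>I. x i < \<eta>)"
proof -
  define M1 where "M1 = PiM {1..n+1} (\<lambda>_. lborel :: real measure)"
  define M2 where "M2 = PiM ({1..n} - {j}) (\<lambda>_. lborel :: real measure)"
  define W where "W \<omega> = sawtooth_weight n f g (fst \<omega>) ((snd \<omega>)(j := t))" for \<omega>
  define q where "q = (1 - \<eta>) ^ card I"
  interpret product_sigma_finite "\<lambda>_::nat. lborel :: real measure"
    by (simp add: product_sigma_finite_def sigma_finite_lborel)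
  interpret pair_sigma_finite M1 M2
    unfolding pair_sigma_finite_def M1_def M2_def by (auto intro: sigma_finite)
  have [measurable]: "(\<lambda>\<omega>. fst \<omega> k) \<in> borel_measurable (M1 \<Otimes>\<^sub>M M2)"
    "(\<lambda>\<omega>. snd \<omega> k) \<in> borel_measurable (M1 \<Otimes>\<^sub>M M2)" for k
    unfolding M1_def M2_def
    by (auto intro: measurable_compose[OF measurable_fst borel_measurable_PiM_component]
        measurable_compose[OF measurable_snd borel_measurable_PiM_component])
  then have [measurable]: "(\<lambda>\<omega>. ((snd \<omega>)(j := t)) k) \<in> borel_measurable (M1 \<Otimes>\<^sub>M M2)" for k
    by (cases "k = j") simp_all
  have W_meas[measurable]: "W \<in> borel_measurable (M1 \<Otimes>\<^sub>M M2)"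
    unfolding W_def by (rule borel_measurable_sawtooth_weight) measurable
  have "finite I" using I finite_subset by blast
  then have below_meas: "Measurable.pred (M1 \<Otimes>\<^sub>M M2) (\<lambda>\<omega>. \<exists>i\<in>I. fst \<omega> i < \<eta>)"
    by measurable
  have slice: "sawtooth_slice n f g j t (\<lambda>x y. P x) = (\<integral>\<omega>. (if P (fst \<omega>) then 1 else 0) * W \<omega> \<partial>(M1 \<Otimes>\<^sub>M M2))" for P
    unfolding sawtooth_slice_def M1_def M2_def W_def by (simp add: case_prod_beta')
  have "(\<integral>\<^sup>+\<omega>. ennreal ((if \<exists>i\<in>I. fst \<omega> i < \<eta> then 0 else 1) * W \<omega>) \<partial>(M1 \<Otimes>\<^sub>M M2))
      \<le> ennreal q * (\<integral>\<^sup>+\<omega>. ennreal (W \<omega>) \<partial>(M1 \<Otimes>\<^sub>M M2))"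
  proof (rule nn_integral_le_cmult_of_fibres)
    fix y
    have "(\<integral>\<^sup>+x. ennreal ((if \<exists>i\<in>I. fst (x, y) i < \<eta> then 0 else 1) * W (x, y)) \<partial>M1)
        = (\<integral>\<^sup>+x. ennreal ((if \<forall>i\<in>I. \<eta> \<le> x i then 1 else 0) * sawtooth_weight n f g x (y(j := t))) \<partial>M1)"
      by (intro nn_integral_cong) (auto simp: W_def not_less)
    also have "\<dots> \<le> ennreal q * (\<integral>\<^sup>+x. ennreal (W (x, y)) \<partial>M1)"
      unfolding M1_def q_def W_def fst_conv snd_conv using \<eta> I
      by (rule nn_integral_sawtooth_weight_all_above_le)
    finally show "(\<integral>\<^sup>+x. ennreal ((if \<exists>i\<in>I. fst (x, y) i < \<eta> then 0 else 1) * W (x, y)) \<partial>M1)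
        \<le> ennreal q * (\<integral>\<^sup>+x. ennreal (W (x, y)) \<partial>M1)" .
  qed (use below_meas in measurable)
  then have "1 - q \<le> (\<integral>\<omega>. (if \<exists>i\<in>I. fst \<omega> i < \<eta> then 1 else 0) * W \<omega> \<partial>(M1 \<Otimes>\<^sub>M M2))
      / (\<integral>\<omega>. W \<omega> \<partial>(M1 \<Otimes>\<^sub>M M2))"
    using pos \<eta> sawtooth_weight_nonneg
    by (intro integral_ratio_ge_of_complement_le[OF W_meas _ below_meas])
      (auto simp: q_def W_def sawtooth_marg_def slice[of "\<lambda>_. True", simplified])
  then show ?thesis
    by (simp add: sawtooth_cond_def sawtooth_marg_def slice q_def)
qed

end

theorem mainTheorem13:
  fixes \<eta> \<epsilon> :: real
  assumes "0 < \<eta>" and "\<eta> < 1" and "0 < \<epsilon>"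
  shows "\<exists>N0::nat. \<forall>n f g. sawtooth_model n f g \<and> n \<ge> N0 + 4 \<longrightarrow>
           (\<forall>r t. 2 \<le> r \<and> r \<le> n - N0 \<and> 0 \<le> t \<and> t \<le> 1 \<and>
                  sawtooth_marg n f g (r + N0) t > 0 \<longrightarrow>
              sawtooth_cond n f g (r + N0) t (\<lambda>x y. \<exists>i\<in>{r..r + N0}. x i < \<eta>) \<ge> 1 - \<epsilon>)"
proof -
  obtain N where N: "(1 - \<eta>) ^ N < \<epsilon>"
    using real_arch_pow_inv[of \<epsilon> "1 - \<eta>"] assms by auto
  have "(1 - \<eta>) ^ Suc N \<le> (1 - \<eta>) ^ N"
    using assms by (intro power_decreasing) auto
  then have small: "(1 - \<eta>) ^ card {r..r + N} \<le> \<epsilon>" for r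
    using N by simp
  show ?thesis
  proof (intro exI[of _ N] allI impI, elim conjE)
    fix n f g r t
    assume model: "sawtooth_model n f g" and "N + 4 \<le> n" "2 \<le> r" "r \<le> n - N"
      and "0 < sawtooth_marg n f g (r + N) t"
    interpret sawtooth n f g
      using model by unfold_locales
    have "1 - (1 - \<eta>) ^ card {r..r + N}
        \<le> sawtooth_cond n f g (r + N) t (\<lambda>x y. \<exists>i\<in>{r..r + N}. x i < \<eta>)"
      using assms \<open>2 \<le> r\<close> \<open>r \<le> n - N\<close> \<open>0 < sawtooth_marg n f g (r + N) t\<close>
      by (intro sawtooth_cond_some_below_ge) auto
    then show "1 - \<epsilon> \<le> sawtooth_cond n f g (r + N) t (\<lambda>x y. \<exists>i\<in>{r..r + N}. x i < \<eta>)"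
      using small[of r] by linarith
  qed
qed

end
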